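(* Let $G$ be a finite simple connected graph with $m\ge 1$ edges such that $\sum_{e_{uv}\in E}(d_u+d_v)=4m$. Then $G$ is either a cycle (of any order) or a tree having a unique vertex of largest degree, this largest degree being $\Delta=3$. In the latter case the tree has order $n\geq 4$.
   Context: $d_u$ denotes the degree of vertex $u$; the sum is over all edges $e_{uv}$ of $G$, each counted once. *)

theory Defs
  imports Main
begin

definition simple_graph :: "'a set \<Rightarrow> ('a \<Rightarrow> 'a \<Rightarrow> bool) \<Rightarrow> bool" where
  "simple_graph V E \<longleftrightarrow> finite V \<and> (\<forall>u v. E u v \<longrightarrow> u \<in> V \<and> v \<in> V)
     \<and> (\<forall>u v. E u v \<longrightarrow> E v u) \<and> (\<forall>v. \<not> E v v)"

definition edges :: "'a set \<Rightarrow> ('a \<Rightarrow> 'a \<Rightarrow> bool) \<Rightarrow> 'a set set" where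
  "edges V E = {{u, v} | u v. u \<in> V \<and> v \<in> V \<and> E u v}"

definition degree :: "'a set \<Rightarrow> ('a \<Rightarrow> 'a \<Rightarrow> bool) \<Rightarrow> 'a \<Rightarrow> nat" where
  "degree V E v = card {u \<in> V. E v u}"

definition max_degree :: "'a set \<Rightarrow> ('a \<Rightarrow> 'a \<Rightarrow> bool) \<Rightarrow> nat" where
  "max_degree V E = Max (degree V E ` V)"

definition connected_graph :: "'a set \<Rightarrow> ('a \<Rightarrow> 'a \<Rightarrow> bool) \<Rightarrow> bool" where
  "connected_graph V E \<longleftrightarrow> V \<noteq> {} \<and> (\<forall>u\<in>V. \<forall>v\<in>V. E\<^sup>*\<^sup>* u v)"

definition has_cycle :: "'a set \<Rightarrow> ('a \<Rightarrow> 'a \<Rightarrow> bool) \<Rightarrow> bool" where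
  "has_cycle V E \<longleftrightarrow> (\<exists>vs. length vs \<ge> 3 \<and> distinct vs \<and> set vs \<subseteq> V
     \<and> (\<forall>i < length vs. E (vs ! i) (vs ! ((i + 1) mod length vs))))"

definition is_tree :: "'a set \<Rightarrow> ('a \<Rightarrow> 'a \<Rightarrow> bool) \<Rightarrow> bool" where
  "is_tree V E \<longleftrightarrow> connected_graph V E \<and> \<not> has_cycle V E"

definition is_cycle_graph :: "'a set \<Rightarrow> ('a \<Rightarrow> 'a \<Rightarrow> bool) \<Rightarrow> bool" where
  "is_cycle_graph V E \<longleftrightarrow> (\<exists>(n::nat) f. n \<ge> 3 \<and> bij_betw f {..<n} V \<and>
     (\<forall>i<n. \<forall>j<n. E (f i) (f j) \<longleftrightarrow> (j = (i + 1) mod n \<or> i = (j + 1) mod n)))"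

end

theory Submission
  imports Defs
begin

(* Let G have n vertices and m edges.  Double counting turns the hypothesis into
   \<Sum>\<^sub>v d\<^sub>v\<^sup>2 = 4m, and with the handshake lemma \<Sum>\<^sub>v d\<^sub>v = 2m this becomes
   \<Sum>\<^sub>v (d\<^sub>v - 1)(d\<^sub>v - 2) = 2(n - m).  Every summand is a non-negative even number,
   whereas a connected graph has m \<ge> n - 1, and even m \<ge> n if it contains a cycle.
   So either m = n and all summands vanish, which together with \<Sum>\<^sub>v d\<^sub>v = 2n makes
   the graph 2-regular, i.e. a cycle; or m = n - 1, the graph is a tree, and the
   summands add up to 2: exactly one vertex has degree 3 and all others have degree
   at most 2. *)

lemma simple_graphD:
  assumes "simple_graph V E"
  shows "finite V" and "E u v \<Longrightarrow> u \<in> V" and "E u v \<Longrightarrow> v \<in> V"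
    and "E u v \<Longrightarrow> E v u" and "\<not> E v v"
  using assms unfolding simple_graph_def by blast+

lemma finite_edges:
  assumes "simple_graph V E"
  shows "finite (edges V E)"
proof -
  have "edges V E \<subseteq> Pow V"
    unfolding edges_def by auto
  then show ?thesis
    using simple_graphD(1)[OF assms] by (simp add: finite_subset)
qed

lemma card_edge:
  assumes "simple_graph V E" and "e \<in> edges V E"
  shows "card e = 2"
proof -
  obtain u v where "e = {u, v}" and "E u v"
    using assms(2) unfolding edges_def by auto
  then show ?thesis
    using simple_graphD(5)[OF assms(1)] by (metis card_2_iff)
qed

lemma card_incident_edges:
  assumes sg: "simple_graph V E" and v: "v \<in> V"
  shows "card {e \<in> edges V E. v \<in> e} = degree V E v"
proof -
  have "bij_betw (\<lambda>u. {v, u}) {u \<in> V. E v u} {e \<in> edges V E. v \<in> e}"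
  proof (rule bij_betwI')
    show "{v, x} = {v, y} \<longleftrightarrow> x = y" for x y
      by (auto simp: doubleton_eq_iff)
    show "{v, x} \<in> {e \<in> edges V E. v \<in> e}" if "x \<in> {u \<in> V. E v u}" for x
      using v that unfolding edges_def by auto
    show "\<exists>x\<in>{u \<in> V. E v u}. e = {v, x}" if "e \<in> {e \<in> edges V E. v \<in> e}" for e
      using that simple_graphD(4)[OF sg] unfolding edges_def by auto
  qed
  then show ?thesis
    unfolding degree_def by (metis bij_betw_same_card)
qed

lemma sum_edges_sum_endpoints:
  fixes g :: "'a \<Rightarrow> 'b::comm_semiring_1"
  assumes sg: "simple_graph V E"
  shows "(\<Sum>e\<in>edges V E. \<Sum>v\<in>e. g v) = (\<Sum>v\<in>V. of_nat (degree V E v) * g v)"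
proof -
  have "(\<Sum>e\<in>edges V E. \<Sum>v\<in>e. g v) = (\<Sum>e\<in>edges V E. \<Sum>v\<in>{v \<in> V. v \<in> e}. g v)"
    by (intro sum.cong refl) (auto simp: edges_def)
  also have "\<dots> = (\<Sum>v\<in>V. \<Sum>e\<in>{e \<in> edges V E. v \<in> e}. g v)"
    using sum.swap_restrict[OF finite_edges[OF sg] simple_graphD(1)[OF sg]] .
  also have "\<dots> = (\<Sum>v\<in>V. of_nat (degree V E v) * g v)"
    by (intro sum.cong refl) (simp add: card_incident_edges[OF sg])
  finally show ?thesis .
qed

lemma sum_degree_eq_twice_card_edges:
  assumes sg: "simple_graph V E"
  shows "(\<Sum>v\<in>V. degree V E v) = 2 * card (edges V E)"
proof -
  have "(\<Sum>v\<in>V. degree V E v) = (\<Sum>e\<in>edges V E. card e)"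
    using sum_edges_sum_endpoints[OF sg, of "\<lambda>_. 1::nat"] by simp
  also have "\<dots> = 2 * card (edges V E)"
    using card_edge[OF sg] by simp
  finally show ?thesis .
qed

lemma degree_less_card:
  assumes sg: "simple_graph V E" and "v \<in> V"
  shows "degree V E v < card V"
proof -
  have "{u \<in> V. E v u} \<subset> V"
    using assms simple_graphD(5)[OF sg] by blast
  then show ?thesis
    unfolding degree_def using simple_graphD(1)[OF sg] by (rule psubset_card_mono[rotated])
qed

lemma connected_graph_closed_subset_eq:
  assumes cn: "connected_graph V E" and "S \<subseteq> V" and "a \<in> S"
    and closed: "\<And>x y. x \<in> S \<Longrightarrow> E x y \<Longrightarrow> y \<in> S"
  shows "S = V"
proof -
  have "v \<in> S" if "v \<in> V" for v
  proof -
    have "E\<^sup>*\<^sup>* a v"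
      using assms(2,3) cn that unfolding connected_graph_def by blast
    then show ?thesis
      by induction (use assms(3) closed in auto)
  qed
  then show ?thesis
    using assms(2) by blast
qed

lemma connected_degree_pos:
  assumes sg: "simple_graph V E" and cn: "connected_graph V E"
    and "edges V E \<noteq> {}" and v: "v \<in> V"
  shows "0 < degree V E v"
proof (rule ccontr)
  assume "\<not> 0 < degree V E v"
  then have "{u \<in> V. E v u} = {}"
    using simple_graphD(1)[OF sg] unfolding degree_def by simp
  then have "\<not> E v u" for u
    using simple_graphD(3)[OF sg] by blast
  then have "{v} = V"
    using connected_graph_closed_subset_eq[OF cn _ singletonI] v by blast
  then have "edges V E = {}"
    using simple_graphD(5)[OF sg] unfolding edges_def by auto
  with assms(3) show False ..
qed

lemma connected_card_le_Suc_card_edges: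
  assumes sg: "simple_graph V E" and cn: "connected_graph V E"
  shows "card V \<le> Suc (card (edges V E))"
proof -
  obtain r where r: "r \<in> V"
    using cn unfolding connected_graph_def by auto
  define dist where "dist v = (LEAST k. (E ^^ k) r v)" for v
  have "\<exists>u. E u v \<and> dist u < dist v" if "v \<in> V - {r}" for v
  proof -
    have "\<exists>k. (E ^^ k) r v"
      using cn r that unfolding connected_graph_def by (simp add: rtranclp_power)
    then have walk: "(E ^^ dist v) r v"
      unfolding dist_def by (rule LeastI_ex)
    then have "dist v \<noteq> 0"
      using that by (metis DiffE relpowp.simps(1) singletonI)
    then obtain j u where "dist v = Suc j" and "(E ^^ j) r u" and "E u v"
      using walk by (metis not0_implies_Suc relpowp_Suc_E)
    moreover from \<open>(E ^^ j) r u\<close> have "dist u \<le> j"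
      unfolding dist_def by (rule Least_le)
    ultimately show ?thesis
      by auto
  qed
  then obtain p where p: "\<And>v. v \<in> V - {r} \<Longrightarrow> E (p v) v \<and> dist (p v) < dist v"
    by metis
  have "inj_on (\<lambda>v. {p v, v}) (V - {r})"
  proof (rule inj_onI)
    fix x y
    assume "x \<in> V - {r}" and "y \<in> V - {r}" and "{p x, x} = {p y, y}"
    then show "x = y"
      using p by (metis doubleton_eq_iff less_asym)
  qed
  moreover have "(\<lambda>v. {p v, v}) ` (V - {r}) \<subseteq> edges V E"
    using p simple_graphD[OF sg] unfolding edges_def by blast
  ultimately have "card (V - {r}) \<le> card (edges V E)"
    using card_inj_on_le finite_edges[OF sg] by blast
  then show ?thesis
    using r simple_graphD(1)[OF sg] by simp
qed

lemma rtranclp_nth_chain: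
  assumes "\<And>i. Suc i < length xs \<Longrightarrow> R (xs ! i) (xs ! Suc i)" and "j < length xs"
  shows "R\<^sup>*\<^sup>* (xs ! 0) (xs ! j)"
  using assms(2) by (induction j) (auto intro: rtranclp.rtrancl_into_rtrancl assms(1))

lemma connected_graph_delete_edge:
  assumes sg: "simple_graph V E" and cn: "connected_graph V E"
    and path: "(\<lambda>x y. E x y \<and> {x, y} \<noteq> {a, b})\<^sup>*\<^sup>* a b"
  shows "connected_graph V (\<lambda>x y. E x y \<and> {x, y} \<noteq> {a, b})"
proof -
  let ?E' = "\<lambda>x y. E x y \<and> {x, y} \<noteq> {a, b}"
  have "symp ?E'"
    using simple_graphD(4)[OF sg] by (auto intro: sympI simp: insert_commute)
  then have "?E'\<^sup>*\<^sup>* b a"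
    using path by (rule sympD[OF symp_rtranclp])
  then have "?E'\<^sup>*\<^sup>* x y" if "E x y" for x y
    using that path by (cases "{x, y} = {a, b}") (auto simp: doubleton_eq_iff)
  then have "E\<^sup>*\<^sup>* \<le> (?E'\<^sup>*\<^sup>*)\<^sup>*\<^sup>*"
    by (intro rtranclp_mono predicate2I)
  then have "E\<^sup>*\<^sup>* \<le> ?E'\<^sup>*\<^sup>*"
    by simp
  then show ?thesis
    using cn unfolding connected_graph_def by blast
qed

definition is_path :: "'a set \<Rightarrow> ('a \<Rightarrow> 'a \<Rightarrow> bool) \<Rightarrow> 'a list \<Rightarrow> bool" where
  "is_path V E xs \<longleftrightarrow> distinct xs \<and> set xs \<subseteq> V
     \<and> (\<forall>i. Suc i < length xs \<longrightarrow> E (xs ! i) (xs ! Suc i))"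

definition is_cycle :: "'a set \<Rightarrow> ('a \<Rightarrow> 'a \<Rightarrow> bool) \<Rightarrow> 'a list \<Rightarrow> bool" where
  "is_cycle V E vs \<longleftrightarrow> length vs \<ge> 3 \<and> distinct vs \<and> set vs \<subseteq> V
     \<and> (\<forall>i < length vs. E (vs ! i) (vs ! (Suc i mod length vs)))"

lemma has_cycle_iff_ex_is_cycle: "has_cycle V E \<longleftrightarrow> (\<exists>vs. is_cycle V E vs)"
  unfolding has_cycle_def is_cycle_def by simp

lemma is_cycle_rtranclp_without_closing_edge:
  assumes "is_cycle V E vs"
  defines "a \<equiv> vs ! 0" and "b \<equiv> vs ! (length vs - 1)"
  shows "(\<lambda>x y. E x y \<and> {x, y} \<noteq> {a, b})\<^sup>*\<^sup>* a b"
proof -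
  define k where "k = length vs"
  have k3: "3 \<le> k" and "distinct vs"
    and adj: "\<And>i. i < k \<Longrightarrow> E (vs ! i) (vs ! (Suc i mod k))"
    using assms(1) unfolding is_cycle_def k_def by auto
  have ab: "a = vs ! 0" "b = vs ! (k - 1)"
    unfolding a_def b_def k_def by simp_all
  have distinct_nth: "vs ! i = vs ! j \<longleftrightarrow> i = j" if "i < k" "j < k" for i j
    using \<open>distinct vs\<close> that unfolding k_def by (simp add: nth_eq_iff_index_eq)
  have "E (vs ! i) (vs ! Suc i) \<and> {vs ! i, vs ! Suc i} \<noteq> {a, b}" if "Suc i < k" for i
  proof -
    have "E (vs ! i) (vs ! Suc i)"
      using adj[of i] that by simp
    moreover have "vs ! i \<noteq> b" and "vs ! Suc i \<noteq> a"
      using that distinct_nth[of i "k - 1"] distinct_nth[of "Suc i" 0]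
      unfolding ab by simp_all
    moreover have "vs ! i \<noteq> a \<or> vs ! Suc i \<noteq> b"
      using that k3 distinct_nth[of i 0] distinct_nth[of "Suc i" "k - 1"]
      unfolding ab by auto
    ultimately show ?thesis
      by (auto simp: doubleton_eq_iff)
  qed
  moreover have "k - 1 < length vs"
    using k3 unfolding k_def by simp
  ultimately show ?thesis
    using rtranclp_nth_chain[of vs _ "k - 1"] unfolding ab k_def[symmetric] by simp
qed

lemma connected_card_le_card_edges_if_has_cycle:
  assumes sg: "simple_graph V E" and cn: "connected_graph V E" and "has_cycle V E"
  shows "card V \<le> card (edges V E)"
proof -
  obtain vs where cyc: "is_cycle V E vs"
    using assms(3) has_cycle_iff_ex_is_cycle by blast
  define a where "a = vs ! 0"
  define b where "b = vs ! (length vs - 1)"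
  define E' where "E' x y \<longleftrightarrow> E x y \<and> {x, y} \<noteq> {a, b}" for x y
  have "E'\<^sup>*\<^sup>* a b"
    using is_cycle_rtranclp_without_closing_edge[OF cyc] unfolding E'_def a_def b_def .
  then have cn': "connected_graph V E'"
    using connected_graph_delete_edge[OF sg cn] unfolding E'_def by simp
  have sg': "simple_graph V E'"
    using sg unfolding simple_graph_def E'_def by (auto simp: insert_commute)
  have len: "3 \<le> length vs"
    and adj: "\<And>i. i < length vs \<Longrightarrow> E (vs ! i) (vs ! (Suc i mod length vs))"
    using cyc unfolding is_cycle_def by auto
  then have "Suc (length vs - 1) = length vs"
    by simp
  then have "E b a"
    using adj[of "length vs - 1"] unfolding a_def b_def by simp
  then have "{a, b} \<in> edges V E"
    using simple_graphD[OF sg] unfolding edges_def by blast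
  moreover have "edges V E' = edges V E - {{a, b}}"
    unfolding edges_def E'_def by auto
  ultimately have "Suc (card (edges V E')) = card (edges V E)"
    using finite_edges[OF sg] by (metis card_Suc_Diff1)
  then show ?thesis
    using connected_card_le_Suc_card_edges[OF sg' cn'] by simp
qed

lemma ex_longest_path:
  assumes sg: "simple_graph V E"
  obtains xs where "is_path V E xs" and "\<And>ys. is_path V E ys \<Longrightarrow> length ys \<le> length xs"
proof -
  have "length xs < Suc (card V)" if "is_path V E xs" for xs
  proof -
    have "length xs = card (set xs)"
      using that unfolding is_path_def by (simp add: distinct_card)
    also have "\<dots> \<le> card V"
      using that simple_graphD(1)[OF sg] unfolding is_path_def by (simp add: card_mono)
    finally show ?thesis
      by simp
  qed
  moreover have "is_path V E []"
    unfolding is_path_def by simp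
  ultimately show ?thesis
    using Lattices_Big.ex_has_greatest_nat[of "is_path V E" "[]" length "Suc (card V)"] that by blast
qed

lemma is_cycle_take_if_closing_edge:
  assumes path: "is_path V E xs" and j: "j < length xs" "2 \<le> j" and closing: "E (xs ! j) (xs ! 0)"
  shows "is_cycle V E (take (Suc j) xs)"
proof -
  let ?vs = "take (Suc j) xs"
  have len: "length ?vs = Suc j"
    using j by simp
  have "E (?vs ! i) (?vs ! (Suc i mod length ?vs))" if "i < length ?vs" for i
  proof (cases "i = j")
    case True
    then show ?thesis
      using len j closing by simp
  next
    case False
    then have "Suc i < Suc j"
      using that len by simp
    then show ?thesis
      using len j path unfolding is_path_def by simp
  qed
  moreover have "distinct ?vs" and "set ?vs \<subseteq> V"
    using path set_take_subset[of "Suc j" xs] unfolding is_path_def by auto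
  ultimately show ?thesis
    unfolding is_cycle_def using len j(2) by simp
qed

(* The first vertex of a longest path has a neighbour other than the second one; by
   maximality that neighbour lies on the path, and the edge to it closes a cycle. *)
lemma ex_cycle_if_degree_ge_2:
  assumes sg: "simple_graph V E" and "V \<noteq> {}"
    and deg: "\<And>v. v \<in> V \<Longrightarrow> 2 \<le> degree V E v"
  shows "\<exists>vs. is_cycle V E vs"
proof -
  obtain xs where path: "is_path V E xs"
    and longest: "\<And>ys. is_path V E ys \<Longrightarrow> length ys \<le> length xs"
    using ex_longest_path[OF sg] by blast
  obtain v where "v \<in> V"
    using assms(2) by blast
  then have "is_path V E [v]"
    unfolding is_path_def by simp
  then have "xs \<noteq> []"
    using longest by fastforce
  let ?x = "xs ! 0"
  have "\<not> {u \<in> V. E ?x u} \<subseteq> {xs ! 1}"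
  proof
    assume "{u \<in> V. E ?x u} \<subseteq> {xs ! 1}"
    then have "degree V E ?x \<le> 1"
      unfolding degree_def using card_mono[of "{xs ! 1}"] by fastforce
    moreover have "?x \<in> V"
      using path \<open>xs \<noteq> []\<close> unfolding is_path_def by auto
    ultimately show False
      using deg by fastforce
  qed
  then obtain y where y: "E ?x y" "y \<noteq> xs ! 1"
    by blast
  have "y \<in> set xs"
  proof (rule ccontr)
    assume "y \<notin> set xs"
    then have "is_path V E (y # xs)"
      using path y simple_graphD[OF sg] unfolding is_path_def
      by (auto simp: nth_Cons split: nat.split)
    then show False
      using longest by fastforce
  qed
  then obtain j where j: "j < length xs" "xs ! j = y"
    by (auto simp: in_set_conv_nth)
  have "j \<noteq> 0"
  proof
    assume "j = 0"
    then show False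
      using j(2) y(1) simple_graphD(5)[OF sg] by simp
  qed
  moreover have "j \<noteq> 1"
    using j y(2) by auto
  moreover have "E (xs ! j) ?x"
    using j(2) y(1) simple_graphD(4)[OF sg] by simp
  ultimately show ?thesis
    using is_cycle_take_if_closing_edge[OF path j(1)] by fastforce
qed

lemma cycle_neighbours_if_degree_2:
  assumes sg: "simple_graph V E" and cyc: "is_cycle V E vs" and i: "i < length vs"
    and deg: "degree V E (vs ! i) = 2"
  shows "{u \<in> V. E (vs ! i) u}
    = {vs ! (Suc i mod length vs), vs ! ((i + length vs - 1) mod length vs)}"
proof -
  define k where "k = length vs"
  define h where "h = (i + k - 1) mod k"
  have k3: "3 \<le> k" and "distinct vs"
    and adj: "\<And>i. i < k \<Longrightarrow> E (vs ! i) (vs ! (Suc i mod k))"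
    using cyc unfolding is_cycle_def k_def by auto
  have "i < k"
    using i unfolding k_def .
  then have "h < k" and "Suc i mod k < k" and "Suc h mod k = i" and "h \<noteq> Suc i mod k"
    using k3 unfolding h_def by (auto simp: mod_if)
  then have "E (vs ! h) (vs ! i)"
    using adj[of h] by simp
  moreover have "E (vs ! i) (vs ! (Suc i mod k))"
    using adj \<open>i < k\<close> by simp
  ultimately have sub: "{vs ! (Suc i mod k), vs ! h} \<subseteq> {u \<in> V. E (vs ! i) u}"
    using simple_graphD[OF sg] by blast
  have "vs ! (Suc i mod k) \<noteq> vs ! h"
    using nth_eq_iff_index_eq[OF \<open>distinct vs\<close>, of "Suc i mod k" h]
      \<open>h < k\<close> \<open>Suc i mod k < k\<close> \<open>h \<noteq> Suc i mod k\<close>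
    unfolding k_def by simp
  then have "card {vs ! (Suc i mod k), vs ! h} = 2"
    by simp
  moreover have "finite {u \<in> V. E (vs ! i) u}"
    using simple_graphD(1)[OF sg] by simp
  ultimately have "{vs ! (Suc i mod k), vs ! h} = {u \<in> V. E (vs ! i) u}"
    using card_subset_eq[OF _ sub] deg unfolding degree_def by simp
  then show ?thesis
    unfolding h_def k_def by simp
qed

lemma is_cycle_graph_if_2_regular:
  assumes sg: "simple_graph V E" and cn: "connected_graph V E"
    and deg: "\<And>v. v \<in> V \<Longrightarrow> degree V E v = 2"
  shows "is_cycle_graph V E"
proof -
  obtain vs where cyc: "is_cycle V E vs"
    using ex_cycle_if_degree_ge_2[OF sg] cn deg unfolding connected_graph_def by fastforce
  define k where "k = length vs"
  define pred where "pred i = (i + k - 1) mod k" for i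
  have k3: "3 \<le> k" and "distinct vs" and "set vs \<subseteq> V"
    using cyc unfolding is_cycle_def k_def by auto
  have succ_less: "Suc i mod k < k" and pred_less: "pred i < k" for i
    using k3 unfolding pred_def by simp_all
  have neighbours: "{u \<in> V. E (vs ! i) u} = {vs ! (Suc i mod k), vs ! pred i}" if "i < k" for i
    using cycle_neighbours_if_degree_2[OF sg cyc] deg nth_mem \<open>set vs \<subseteq> V\<close> that
    unfolding pred_def k_def by blast
  have "set vs = V"
  proof (rule connected_graph_closed_subset_eq[OF cn \<open>set vs \<subseteq> V\<close>])
    show "vs ! 0 \<in> set vs"
      using k3 unfolding k_def by (intro nth_mem) linarith
    show "y \<in> set vs" if "x \<in> set vs" and "E x y" for x y
    proof -
      obtain i where "i < k" and "x = vs ! i"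
        using \<open>x \<in> set vs\<close> unfolding k_def by (auto simp: in_set_conv_nth)
      then have "y \<in> {vs ! (Suc i mod k), vs ! pred i}"
        using neighbours \<open>E x y\<close> simple_graphD(3)[OF sg] by blast
      then show ?thesis
        using succ_less pred_less unfolding k_def by auto
    qed
  qed
  then have "bij_betw ((!) vs) {..<k} V"
    using bij_betw_nth[OF \<open>distinct vs\<close>] unfolding k_def by simp
  moreover have "E (vs ! i) (vs ! j) \<longleftrightarrow> j = (i + 1) mod k \<or> i = (j + 1) mod k"
    if "i < k" and "j < k" for i j
  proof -
    have "vs ! j \<in> V"
      using that(2) \<open>set vs \<subseteq> V\<close> nth_mem unfolding k_def by blast
    then have "E (vs ! i) (vs ! j) \<longleftrightarrow> vs ! j \<in> {vs ! (Suc i mod k), vs ! pred i}"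
      using neighbours[OF that(1)] by blast
    also have "\<dots> \<longleftrightarrow> j = Suc i mod k \<or> j = pred i"
      using nth_eq_iff_index_eq[OF \<open>distinct vs\<close>, of j "Suc i mod k"]
        nth_eq_iff_index_eq[OF \<open>distinct vs\<close>, of j "pred i"] that succ_less pred_less
      unfolding k_def by auto
    also have "\<dots> \<longleftrightarrow> j = (i + 1) mod k \<or> i = (j + 1) mod k"
      using that unfolding pred_def by (auto simp: mod_if)
    finally show ?thesis .
  qed
  ultimately show ?thesis
    unfolding is_cycle_graph_def using k3 by (auto intro!: exI[of _ k] exI[of _ "(!) vs"])
qed

(* The subtraction is truncated, which is harmless: for d = 1 the product is 0 anyway. *)
lemma sum_degree_excess:
  assumes sg: "simple_graph V E"
    and sum_sq: "(\<Sum>e\<in>edges V E. \<Sum>v\<in>e. degree V E v) = 4 * card (edges V E)"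
    and pos: "\<And>v. v \<in> V \<Longrightarrow> 0 < degree V E v"
  shows "(\<Sum>v\<in>V. (degree V E v - 1) * (degree V E v - 2)) + 2 * card (edges V E) = 2 * card V"
proof -
  let ?d = "degree V E" and ?m = "card (edges V E)"
  have "(\<Sum>v\<in>V. ?d v ^ 2) + 2 * card V = (\<Sum>v\<in>V. ?d v ^ 2 + 2)"
    unfolding sum.distrib by simp
  also have "\<dots> = (\<Sum>v\<in>V. (?d v - 1) * (?d v - 2) + 3 * ?d v)"
  proof (rule sum.cong)
    show "?d v ^ 2 + 2 = (?d v - 1) * (?d v - 2) + 3 * ?d v" if "v \<in> V" for v
      using pos[OF that] by (cases "?d v"; cases "?d v - 1") (auto simp: power2_eq_square)
  qed simp
  also have "\<dots> = (\<Sum>v\<in>V. (?d v - 1) * (?d v - 2)) + 3 * (\<Sum>v\<in>V. ?d v)"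
    by (simp only: sum.distrib sum_distrib_left)
  also have "\<dots> = (\<Sum>v\<in>V. (?d v - 1) * (?d v - 2)) + 6 * ?m"
    using sum_degree_eq_twice_card_edges[OF sg] by simp
  finally have "(\<Sum>v\<in>V. ?d v ^ 2) + 2 * card V = (\<Sum>v\<in>V. (?d v - 1) * (?d v - 2)) + 6 * ?m" .
  moreover have "(\<Sum>v\<in>V. ?d v ^ 2) = 4 * ?m"
    using sum_edges_sum_endpoints[OF sg, of ?d] sum_sq by (simp add: power2_eq_square)
  ultimately show ?thesis
    by linarith
qed

lemma all_eq_2_if_sum_excess_eq_0:
  fixes d :: "'a \<Rightarrow> nat"
  assumes "finite A" and pos: "\<And>x. x \<in> A \<Longrightarrow> 0 < d x"
    and excess: "(\<Sum>x\<in>A. (d x - 1) * (d x - 2)) = 0" and sum: "(\<Sum>x\<in>A. d x) = 2 * card A"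
    and "x \<in> A"
  shows "d x = 2"
proof -
  have le2: "d y \<le> 2" if "y \<in> A" for y
    using excess pos[OF that] that \<open>finite A\<close> by (cases "d y \<le> 2") auto
  then have "(\<Sum>y\<in>A. 2 - d y) = 0"
    using sum by (simp add: sum_subtractf_nat)
  then have "2 \<le> d x"
    using \<open>x \<in> A\<close> \<open>finite A\<close> by simp
  then show ?thesis
    using le2[OF \<open>x \<in> A\<close>] by simp
qed

lemma unique_eq_3_if_sum_excess_eq_2:
  fixes d :: "'a \<Rightarrow> nat"
  assumes "finite A" and pos: "\<And>x. x \<in> A \<Longrightarrow> 0 < d x"
    and excess: "(\<Sum>x\<in>A. (d x - 1) * (d x - 2)) = 2"
  shows "\<forall>x\<in>A. d x \<le> 3" and "\<exists>!x. x \<in> A \<and> d x = 3"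
proof -
  have le3: "d x \<le> 3" if "x \<in> A" for x
  proof (rule ccontr)
    assume "\<not> d x \<le> 3"
    then have "3 * 2 \<le> (d x - 1) * (d x - 2)"
      by (intro mult_mono) auto
    moreover have "(d x - 1) * (d x - 2) \<le> 2"
      using member_le_sum[of x A "\<lambda>x. (d x - 1) * (d x - 2)"] that \<open>finite A\<close> excess by simp
    ultimately show False
      by simp
  qed
  then show "\<forall>x\<in>A. d x \<le> 3" ..
  have "(d x - 1) * (d x - 2) = (if d x = 3 then 2 else 0)" if "x \<in> A" for x
    using le3[OF that] pos[OF that] by (cases "d x = 3") (auto simp: numeral_eq_Suc le_Suc_eq)
  then have "2 * card {x \<in> A. d x = 3} = 2"
    using excess \<open>finite A\<close> by (simp add: sum.If_cases Int_def conj_commute)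
  then obtain c where "{x \<in> A. d x = 3} = {c}"
    by (auto simp: card_1_singleton_iff)
  then show "\<exists>!x. x \<in> A \<and> d x = 3"
    by (force simp: set_eq_iff)
qed

lemma is_tree_if_card_eq_Suc_card_edges:
  assumes "simple_graph V E" and "connected_graph V E" and "card V = Suc (card (edges V E))"
  shows "is_tree V E"
  using connected_card_le_card_edges_if_has_cycle[OF assms(1,2)] assms(2,3)
  unfolding is_tree_def by fastforce

lemma max_degree_eqI:
  assumes "finite V" and "v \<in> V" and "degree V E v = k" and "\<And>u. u \<in> V \<Longrightarrow> degree V E u \<le> k"
  shows "max_degree V E = k"
  unfolding max_degree_def using assms by (intro Max_eqI) auto

theorem lemma1:
  fixes V :: "'a set" and E :: "'a \<Rightarrow> 'a \<Rightarrow> bool"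
  assumes "simple_graph V E"
    and "connected_graph V E"
    and "card (edges V E) \<ge> 1"
    and "(\<Sum>e\<in>edges V E. \<Sum>v\<in>e. degree V E v) = 4 * card (edges V E)"
  shows "is_cycle_graph V E \<or>
         (is_tree V E \<and> (\<exists>!v. v \<in> V \<and> degree V E v = max_degree V E)
          \<and> max_degree V E = 3 \<and> card V \<ge> 4)"
proof -
  note sg = assms(1) and cn = assms(2) and fin = simple_graphD(1)[OF assms(1)]
  have pos: "\<And>v. v \<in> V \<Longrightarrow> 0 < degree V E v"
    using connected_degree_pos[OF sg cn] assms(3) by fastforce
  let ?excess = "\<Sum>v\<in>V. (degree V E v - 1) * (degree V E v - 2)"
  have "?excess + 2 * card (edges V E) = 2 * card V"
    using sum_degree_excess[OF sg assms(4) pos] .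
  with connected_card_le_Suc_card_edges[OF sg cn]
  have "?excess = 0 \<and> card V = card (edges V E) \<or> ?excess = 2 \<and> card V = Suc (card (edges V E))"
    by arith
  then show ?thesis
  proof (elim disjE conjE)
    assume "?excess = 0" and "card V = card (edges V E)"
    then have "degree V E v = 2" if "v \<in> V" for v
      using all_eq_2_if_sum_excess_eq_0[OF fin pos _ _ that] sum_degree_eq_twice_card_edges[OF sg]
      by simp
    then show ?thesis
      using is_cycle_graph_if_2_regular[OF sg cn] by blast
  next
    assume "?excess = 2" and "card V = Suc (card (edges V E))"
    then have "is_tree V E"
      using is_tree_if_card_eq_Suc_card_edges[OF sg cn] by blast
    obtain c where c: "c \<in> V" "degree V E c = 3"
      and unique: "\<And>v. v \<in> V \<Longrightarrow> degree V E v = 3 \<Longrightarrow> v = c"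
      and le3: "\<And>v. v \<in> V \<Longrightarrow> degree V E v \<le> 3"
      using unique_eq_3_if_sum_excess_eq_2[OF fin pos \<open>?excess = 2\<close>] by blast
    have "max_degree V E = 3"
      using max_degree_eqI[OF fin c le3] .
    moreover have "card V \<ge> 4"
      using degree_less_card[OF sg c(1)] c(2) by simp
    ultimately show ?thesis
      using \<open>is_tree V E\<close> c unique by auto
  qed
qed

end
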